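(* Let $G\subset \mathrm U(1,n+1)_{\mathbb Cp}$ be a Lie subgroup that is weakly irreducible, i.e. does not preserve any proper nonzero non-degenerate complex subspace of $\mathbb C^{1,n+1}$. Then $\Gamma(G)\subset\mathrm{Sim}\,\mathbb C^n$ does not preserve any proper complex affine subspace of $\mathbb C^n$. Consequently, if $\Gamma(G)$ preserves a proper real affine subspace $L\subset\mathbb C^n$, then the minimal complex affine subspace of $\mathbb C^n$ containing $L$ is $\mathbb C^n$.
   Context: $\mathbb C^{1,n+1}$ has a Witt basis $p,e_1,\dots,e_n,q$ (only nonzero values $h(p,q)=h(q,p)=1$, $h(e_j,e_j)=1$), $\mathbb C^n=\mathrm{span}_{\mathbb C}\{e_1,\dots,e_n\}$ with its Hermitian metric. $\mathrm U(1,n+1)_{\mathbb Cp}$ is the subgroup of $\mathrm U(1,n+1)$ preserving the line $\mathbb Cp$; it is generated by the matrices (in the basis $p,e_1,\dots,e_n,q$) $\begin{pmatrix} e^a&0&0\\0&A&0\\0&0&e^{-\bar a}\end{pmatrix}$ ($a\in\mathbb C$, $A\in\mathrm U(n)$) and $\begin{pmatrix} 1&-\bar Z^t& -\tfrac12\bar Z^tZ+ic\\0&E_n&Z\\0&0&1\end{pmatrix}$ ($Z\in\mathbb C^n$, $c\in\mathbb R$). $\mathrm{Sim}\,\mathbb C^n=(\mathbb R^*\cdot\mathrm U(n))\ltimes\mathbb C^n$ is the group of similarity transformations of $\mathbb C^n$, and $\Gamma:\mathrm U(1,n+1)_{\mathbb Cp}\to\mathrm{Sim}\,\mathbb C^n$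 is the homomorphism sending the first type of generator to the linear map $e^{\bar a}A$ and the second to the translation by $Z$ (geometrically, it is induced by the action on the boundary of complex hyperbolic space minus the point $\mathbb Cp$, i.e. on the Heisenberg space $\mathbb C^n\oplus\mathbb R$, followed by projection to $\mathbb C^n$). *)

theory Defs
  imports "Jordan_Normal_Form.Matrix"
begin

text \<open>C^{1,n+1} is modelled as complex vectors of dimension n+2 with coordinates
 w.r.t. the Witt basis: index 0 = p, indices 1..n = e_1..e_n, index n+1 = q.\<close>

definition hform :: "nat \<Rightarrow> complex vec \<Rightarrow> complex vec \<Rightarrow> complex" where
  "hform n u v = u $ 0 * cnj (v $ (n+1)) + u $ (n+1) * cnj (v $ 0)
                 + (\<Sum>j\<in>{1..n}. u $ j * cnj (v $ j))"

definition pvec :: "nat \<Rightarrow> complex vec" where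
  "pvec n = unit_vec (n+2) 0"

definition U1n :: "nat \<Rightarrow> complex mat set" where
  "U1n n = {M \<in> carrier_mat (n+2) (n+2).
      \<forall>u\<in>carrier_vec (n+2). \<forall>v\<in>carrier_vec (n+2). hform n (M *\<^sub>v u) (M *\<^sub>v v) = hform n u v}"

definition U1n_p :: "nat \<Rightarrow> complex mat set" where
  "U1n_p n = {M \<in> U1n n. \<exists>c::complex. M *\<^sub>v pvec n = c \<cdot>\<^sub>v pvec n}"

definition is_subgroup_of :: "nat \<Rightarrow> complex mat set \<Rightarrow> complex mat set \<Rightarrow> bool" where
  "is_subgroup_of n G H \<longleftrightarrow> G \<subseteq> H \<and> 1\<^sub>m (n+2) \<in> G \<and>
      (\<forall>g\<in>G. \<forall>h\<in>G. g * h \<in> G) \<and> (\<forall>g\<in>G. \<exists>h\<in>G. g * h = 1\<^sub>m (n+2))"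

definition complex_subspace :: "nat \<Rightarrow> complex vec set \<Rightarrow> bool" where
  "complex_subspace m W \<longleftrightarrow> W \<subseteq> carrier_vec m \<and> 0\<^sub>v m \<in> W \<and>
      (\<forall>u\<in>W. \<forall>v\<in>W. u + v \<in> W) \<and> (\<forall>c::complex. \<forall>u\<in>W. c \<cdot>\<^sub>v u \<in> W)"

definition real_subspace :: "nat \<Rightarrow> complex vec set \<Rightarrow> bool" where
  "real_subspace m W \<longleftrightarrow> W \<subseteq> carrier_vec m \<and> 0\<^sub>v m \<in> W \<and>
      (\<forall>u\<in>W. \<forall>v\<in>W. u + v \<in> W) \<and> (\<forall>c::real. \<forall>u\<in>W. complex_of_real c \<cdot>\<^sub>v u \<in> W)"

definition nondegenerate :: "nat \<Rightarrow> complex vec set \<Rightarrow> bool" where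
  "nondegenerate n W \<longleftrightarrow> (\<forall>u\<in>W. (\<forall>v\<in>W. hform n u v = 0) \<longrightarrow> u = 0\<^sub>v (n+2))"

definition preserves_lin :: "complex mat set \<Rightarrow> complex vec set \<Rightarrow> bool" where
  "preserves_lin G W \<longleftrightarrow> (\<forall>g\<in>G. (\<lambda>w. g *\<^sub>v w) ` W = W)"

definition weakly_irreducible :: "nat \<Rightarrow> complex mat set \<Rightarrow> bool" where
  "weakly_irreducible n G \<longleftrightarrow>
     \<not> (\<exists>W. complex_subspace (n+2) W \<and> W \<noteq> {0\<^sub>v (n+2)} \<and> W \<noteq> carrier_vec (n+2)
            \<and> nondegenerate n W \<and> preserves_lin G W)"

definition complex_affine :: "nat \<Rightarrow> complex vec set \<Rightarrow> bool" where
  "complex_affine m S \<longleftrightarrow> (\<exists>x0\<in>carrier_vec m. \<exists>W. complex_subspace m W \<and> S = (\<lambda>w. x0 + w) ` W)"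

definition real_affine :: "nat \<Rightarrow> complex vec set \<Rightarrow> bool" where
  "real_affine m S \<longleftrightarrow> (\<exists>x0\<in>carrier_vec m. \<exists>W. real_subspace m W \<and> S = (\<lambda>w. x0 + w) ` W)"

definition complex_affine_hull :: "nat \<Rightarrow> complex vec set \<Rightarrow> complex vec set" where
  "complex_affine_hull m L = \<Inter> {S. complex_affine m S \<and> L \<subseteq> S}"

text \<open>For
 M = T(Z,c) D(a,A) one has Gamma(M) x = e^{conj a} A x + Z; this is obtained by applying M
 to the vector (0, x, 1), taking the C^n-part and dividing by the q-coordinate
 M_{n+1,n+1} = e^{-conj a}.\<close>
definition Gamma :: "nat \<Rightarrow> complex mat \<Rightarrow> complex vec \<Rightarrow> complex vec" where
  "Gamma n M x =
     (let w = M *\<^sub>v vec (n+2) (\<lambda>i. if i = 0 then 0 else if i \<le> n then x $ (i - 1) else 1)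
      in (1 / M $$ (n+1, n+1)) \<cdot>\<^sub>v vec n (\<lambda>j. w $ (j+1)))"

definition preserves_aff :: "(complex vec \<Rightarrow> complex vec) set \<Rightarrow> complex vec set \<Rightarrow> bool" where
  "preserves_aff F S \<longleftrightarrow> (\<forall>f\<in>F. f ` S = S)"

end

theory Submission
  imports Defs
begin

text \<open>
  An element g of the stabiliser of \<open>\<complex>p\<close> multiplies the q-coordinate by the corner entry
  \<open>k = g\<^sub>n\<^sub>+\<^sub>1\<^sub>,\<^sub>n\<^sub>+\<^sub>1 \<noteq> 0\<close>, so it sends the lift \<open>(0, x, 1)\<close> of a point x of \<open>\<complex>\<^sup>n\<close> to
  \<open>k (0, \<Gamma>(g) x, 1)\<close> modulo \<open>\<complex>p\<close>. Hence if \<open>\<Gamma>(G)\<close> preserves a proper complex affine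
  subspace \<open>x\<^sub>0 + W\<close>, then G preserves the cone over it, the complex span of p and of the lifts of
  its points. This cone is a proper nonzero subspace, and it is non-degenerate: a vector orthogonal
  to it is orthogonal to p, hence has no q-component; orthogonality to the lifts \<open>(0, w, 0)\<close>,
  \<open>w \<in> W\<close>, then kills its middle part and orthogonality to \<open>(0, x\<^sub>0, 1)\<close> its p-component.
  This contradicts weak irreducibility.

  For a real affine L, the complex affine hull consists of the combinations \<open>a + i b - i c\<close> of
  points of L. Each \<open>\<Gamma>(g)\<close> is affine, so it preserves this hull whenever it preserves L.
\<close>

(* Dimensions stay in the form n+2, as in the carrier statements below. *)
declare add_2_eq_Suc' [simp del]

lemma add_diff_cancel_left_vec: "x \<in> carrier_vec n \<Longrightarrow> w \<in> carrier_vec n \<Longrightarrow> x + w - x = w"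
  for x w :: "'a :: ab_group_add vec"
  by (intro eq_vecI) auto

lemma complex_subspace_add: "complex_subspace m W \<Longrightarrow> u \<in> W \<Longrightarrow> v \<in> W \<Longrightarrow> u + v \<in> W"
  by (simp add: complex_subspace_def)

lemma complex_subspace_smult: "complex_subspace m W \<Longrightarrow> u \<in> W \<Longrightarrow> c \<cdot>\<^sub>v u \<in> W"
  by (simp add: complex_subspace_def)

lemma complex_subspace_carrier: "complex_subspace m W \<Longrightarrow> w \<in> W \<Longrightarrow> w \<in> carrier_vec m"
  by (auto simp: complex_subspace_def)

lemma real_subspace_carrier: "real_subspace m V \<Longrightarrow> v \<in> V \<Longrightarrow> v \<in> carrier_vec m"
  by (auto simp: real_subspace_def)

lemma real_subspace_diff:
  assumes V: "real_subspace m V" and u: "u \<in> V" and v: "v \<in> V"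
  shows "u - v \<in> V"
proof -
  have "u + complex_of_real (-1) \<cdot>\<^sub>v v \<in> V"
    using V u v unfolding real_subspace_def by blast
  moreover have "u - v = u + complex_of_real (-1) \<cdot>\<^sub>v v"
    using real_subspace_carrier[OF V u] real_subspace_carrier[OF V v] by (intro eq_vecI) auto
  ultimately show ?thesis by (simp only:)
qed

lemma sum_mult_cnj_eq_0D:
  fixes z :: "'a \<Rightarrow> complex"
  assumes "finite A" "(\<Sum>j\<in>A. z j * cnj (z j)) = 0" "j \<in> A"
  shows "z j = 0"
proof -
  have "complex_of_real (\<Sum>j\<in>A. (cmod (z j))\<^sup>2) = 0"
    using assms(2) by (simp only: of_real_sum complex_norm_square)
  then have "(\<Sum>j\<in>A. (cmod (z j))\<^sup>2) = 0"
    by (simp only: of_real_eq_0_iff)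
  then show ?thesis using assms by (simp add: sum_nonneg_eq_0_iff)
qed

definition lift_point :: "nat \<Rightarrow> complex vec \<Rightarrow> complex vec" where
  "lift_point n x = vec (n+2) (\<lambda>i. if i = 0 then 0 else if i \<le> n then x $ (i - 1) else 1)"

definition lift_vector :: "nat \<Rightarrow> complex vec \<Rightarrow> complex vec" where
  "lift_vector n y = vec (n+2) (\<lambda>i. if i = 0 then 0 else if i \<le> n then y $ (i - 1) else 0)"

definition mid_coords :: "nat \<Rightarrow> complex vec \<Rightarrow> complex vec" where
  "mid_coords n u = vec n (\<lambda>j. u $ (j+1))"

lemma dim_lift_point [simp]: "dim_vec (lift_point n x) = n+2"
  by (simp add: lift_point_def)

lemma lift_point_carrier [simp]: "lift_point n x \<in> carrier_vec (n+2)"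
  by (simp add: lift_point_def)

lemma lift_vector_carrier [simp]: "lift_vector n y \<in> carrier_vec (n+2)"
  by (simp add: lift_vector_def)

lemma pvec_carrier [simp]: "pvec n \<in> carrier_vec (n+2)"
  by (simp add: pvec_def)

lemma Gamma_eq_mid_coords:
  "Gamma n M x = (1 / M $$ (n+1, n+1)) \<cdot>\<^sub>v mid_coords n (M *\<^sub>v lift_point n x)"
  unfolding Gamma_def lift_point_def mid_coords_def Let_def ..

lemma lift_point_affine_comb:
  assumes "x \<in> carrier_vec n" "y \<in> carrier_vec n" "z \<in> carrier_vec n" "a + b + c = 1"
  shows "lift_point n (a \<cdot>\<^sub>v x + b \<cdot>\<^sub>v y + c \<cdot>\<^sub>v z)
    = a \<cdot>\<^sub>v lift_point n x + b \<cdot>\<^sub>v lift_point n y + c \<cdot>\<^sub>v lift_point n z"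
  using assms by (intro eq_vecI) (auto simp: lift_point_def algebra_simps)

lemma Gamma_affine_comb:
  assumes M: "M \<in> carrier_mat (n+2) (n+2)"
    and "x \<in> carrier_vec n" "y \<in> carrier_vec n" "z \<in> carrier_vec n" "a + b + c = 1"
  shows "Gamma n M (a \<cdot>\<^sub>v x + b \<cdot>\<^sub>v y + c \<cdot>\<^sub>v z)
    = a \<cdot>\<^sub>v Gamma n M x + b \<cdot>\<^sub>v Gamma n M y + c \<cdot>\<^sub>v Gamma n M z"
proof -
  have "M *\<^sub>v lift_point n (a \<cdot>\<^sub>v x + b \<cdot>\<^sub>v y + c \<cdot>\<^sub>v z)
      = a \<cdot>\<^sub>v (M *\<^sub>v lift_point n x) + b \<cdot>\<^sub>v (M *\<^sub>v lift_point n y) + c \<cdot>\<^sub>v (M *\<^sub>v lift_point n z)"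
    unfolding lift_point_affine_comb[OF assms(2-5)] using M
    by (simp add: mult_add_distrib_mat_vec[OF M] mult_mat_vec[OF M] assoc_add_vec[of _ "n+2"])
  then show ?thesis
    using M unfolding Gamma_eq_mid_coords
    by (intro eq_vecI) (simp_all add: mid_coords_def distrib_left)
qed

lemma hform_pvec: "hform n u (c \<cdot>\<^sub>v pvec n) = u $ (n+1) * cnj c"
  by (simp add: hform_def pvec_def)

lemma hform_pvec_right: "hform n u (pvec n) = u $ (n+1)"
  using hform_pvec[of n u 1] by simp

lemma hform_lift_vector_right:
  "hform n u (lift_vector n y) = (\<Sum>j\<in>{1..n}. u $ j * cnj (y $ (j - 1)))"
  unfolding hform_def lift_vector_def by (auto intro: sum.cong)

lemma U1n_p_carrier: "g \<in> U1n_p n \<Longrightarrow> g \<in> carrier_mat (n+2) (n+2)"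
  by (simp add: U1n_p_def U1n_def)

lemma U1n_p_last_row:
  assumes "g \<in> U1n_p n"
  shows U1n_p_corner_nonzero: "g $$ (n+1, n+1) \<noteq> 0"
    and U1n_p_last_coord: "u \<in> carrier_vec (n+2) \<Longrightarrow> (g *\<^sub>v u) $ (n+1) = g $$ (n+1, n+1) * u $ (n+1)"
proof -
  obtain c where g: "g \<in> U1n n" and gp: "g *\<^sub>v pvec n = c \<cdot>\<^sub>v pvec n"
    using assms unfolding U1n_p_def by auto
  have key: "(g *\<^sub>v u) $ (n+1) * cnj c = u $ (n+1)" if "u \<in> carrier_vec (n+2)" for u
  proof -
    have "hform n (g *\<^sub>v u) (g *\<^sub>v pvec n) = hform n u (pvec n)"
      using g that pvec_carrier unfolding U1n_def by blast
    then show ?thesis by (simp only: gp hform_pvec hform_pvec_right)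
  qed
  have "(g *\<^sub>v unit_vec (n+2) (n+1)) $ (n+1) = g $$ (n+1, n+1)"
    using U1n_p_carrier[OF assms] by (simp add: scalar_prod_right_unit)
  with key[of "unit_vec (n+2) (n+1)"] have corner: "g $$ (n+1, n+1) * cnj c = 1" by simp
  then show "g $$ (n+1, n+1) \<noteq> 0" by auto
  show "(g *\<^sub>v u) $ (n+1) = g $$ (n+1, n+1) * u $ (n+1)" if "u \<in> carrier_vec (n+2)"
  proof -
    have "(g *\<^sub>v u) $ (n+1) = (g *\<^sub>v u) $ (n+1) * (g $$ (n+1, n+1) * cnj c)"
      using corner by simp
    also have "\<dots> = g $$ (n+1, n+1) * u $ (n+1)"
      using key[OF that] by (simp add: ac_simps)
    finally show ?thesis .
  qed
qed

lemma lift_point_image: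
  assumes g: "g \<in> U1n_p n" and x: "x \<in> carrier_vec n"
  shows "g *\<^sub>v lift_point n x
    = g $$ (n+1, n+1) \<cdot>\<^sub>v lift_point n (Gamma n g x) + (g *\<^sub>v lift_point n x) $ 0 \<cdot>\<^sub>v pvec n"
proof (rule eq_vecI)
  have gc: "g \<in> carrier_mat (n+2) (n+2)" using U1n_p_carrier[OF g] .
  fix i assume "i < dim_vec (g $$ (n+1, n+1) \<cdot>\<^sub>v lift_point n (Gamma n g x)
    + (g *\<^sub>v lift_point n x) $ 0 \<cdot>\<^sub>v pvec n)"
  then have i: "i < n+2" by (simp add: pvec_def)
  then consider "i = 0" | j where "j < n" "i = Suc j" | "i = n+1"
    by (cases i) fastforce+
  then show "(g *\<^sub>v lift_point n x) $ i = (g $$ (n+1, n+1) \<cdot>\<^sub>v lift_point n (Gamma n g x)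
    + (g *\<^sub>v lift_point n x) $ 0 \<cdot>\<^sub>v pvec n) $ i"
  proof cases
    case 1
    then show ?thesis by (simp add: lift_point_def pvec_def)
  next
    case (2 j)
    then show ?thesis
      using U1n_p_corner_nonzero[OF g] gc
      by (simp add: lift_point_def pvec_def Gamma_eq_mid_coords mid_coords_def)
  next
    case 3
    then show ?thesis
      using U1n_p_last_coord[OF g lift_point_carrier] by (simp add: lift_point_def pvec_def)
  qed
qed (use U1n_p_carrier[OF g] in \<open>simp add: pvec_def\<close>)

lemma preserves_lin_if_closed:
  assumes G: "is_subgroup_of n G H" and H: "H \<subseteq> carrier_mat (n+2) (n+2)"
    and U: "U \<subseteq> carrier_vec (n+2)"
    and closed: "\<And>g u. g \<in> G \<Longrightarrow> u \<in> U \<Longrightarrow> g *\<^sub>v u \<in> U"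
  shows "preserves_lin G U"
  unfolding preserves_lin_def
proof (intro ballI equalityI subsetI)
  fix g v assume "g \<in> G" "v \<in> (\<lambda>w. g *\<^sub>v w) ` U"
  then show "v \<in> U" using closed by auto
next
  fix g v assume g: "g \<in> G" and v: "v \<in> U"
  obtain h where h: "h \<in> G" "g * h = 1\<^sub>m (n+2)" using G g unfolding is_subgroup_of_def by auto
  have carrier: "g \<in> carrier_mat (n+2) (n+2)" "h \<in> carrier_mat (n+2) (n+2)" "v \<in> carrier_vec (n+2)"
    using G H U g h v unfolding is_subgroup_of_def by auto
  then have "v = g *\<^sub>v (h *\<^sub>v v)" using h(2) by (simp flip: assoc_mult_mat_vec)
  then show "v \<in> (\<lambda>w. g *\<^sub>v w) ` U" using closed[OF h(1) v] by blast
qed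

definition affine_cone :: "nat \<Rightarrow> complex vec \<Rightarrow> complex vec set \<Rightarrow> complex vec set" where
  "affine_cone n x0 W = {u \<in> carrier_vec (n+2). mid_coords n u - u $ (n+1) \<cdot>\<^sub>v x0 \<in> W}"

lemma lift_point_in_affine_cone_iff:
  assumes "x0 \<in> carrier_vec n" "x \<in> carrier_vec n"
  shows "lift_point n x \<in> affine_cone n x0 W \<longleftrightarrow> x - x0 \<in> W"
proof -
  have "mid_coords n (lift_point n x) - lift_point n x $ (n+1) \<cdot>\<^sub>v x0 = x - x0"
    using assms by (intro eq_vecI) (auto simp: mid_coords_def lift_point_def)
  then show ?thesis by (simp add: affine_cone_def)
qed

lemma lift_vector_in_affine_cone_iff:
  assumes "x0 \<in> carrier_vec n" "y \<in> carrier_vec n"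
  shows "lift_vector n y \<in> affine_cone n x0 W \<longleftrightarrow> y \<in> W"
proof -
  have "mid_coords n (lift_vector n y) - lift_vector n y $ (n+1) \<cdot>\<^sub>v x0 = y"
    using assms by (intro eq_vecI) (auto simp: mid_coords_def lift_vector_def)
  then show ?thesis by (simp add: affine_cone_def)
qed

lemma pvec_in_affine_cone:
  assumes "complex_subspace n W" "x0 \<in> carrier_vec n"
  shows "pvec n \<in> affine_cone n x0 W"
proof -
  have "mid_coords n (pvec n) - pvec n $ (n+1) \<cdot>\<^sub>v x0 = 0\<^sub>v n"
    using assms by (intro eq_vecI) (auto simp: mid_coords_def pvec_def)
  then show ?thesis using assms by (simp add: affine_cone_def complex_subspace_def)
qed

lemma complex_subspace_affine_cone:
  assumes W: "complex_subspace n W" and x0: "x0 \<in> carrier_vec n"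
  shows "complex_subspace (n+2) (affine_cone n x0 W)"
  unfolding complex_subspace_def
proof (intro conjI ballI allI)
  show "affine_cone n x0 W \<subseteq> carrier_vec (n+2)" by (auto simp: affine_cone_def)
  have "mid_coords n (0\<^sub>v (n+2)) - 0\<^sub>v (n+2) $ (n+1) \<cdot>\<^sub>v x0 = 0\<^sub>v n"
    using x0 by (intro eq_vecI) (auto simp: mid_coords_def)
  then show "0\<^sub>v (n+2) \<in> affine_cone n x0 W"
    using W by (simp add: affine_cone_def complex_subspace_def)
next
  fix u v assume u: "u \<in> affine_cone n x0 W" and v: "v \<in> affine_cone n x0 W"
  have "mid_coords n (u + v) - (u + v) $ (n+1) \<cdot>\<^sub>v x0 =
      (mid_coords n u - u $ (n+1) \<cdot>\<^sub>v x0) + (mid_coords n v - v $ (n+1) \<cdot>\<^sub>v x0)"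
    using u v x0 by (intro eq_vecI) (auto simp: affine_cone_def mid_coords_def algebra_simps)
  then show "u + v \<in> affine_cone n x0 W"
    using u v W by (auto simp: affine_cone_def complex_subspace_def)
next
  fix c :: complex and u assume u: "u \<in> affine_cone n x0 W"
  have "mid_coords n (c \<cdot>\<^sub>v u) - (c \<cdot>\<^sub>v u) $ (n+1) \<cdot>\<^sub>v x0 =
      c \<cdot>\<^sub>v (mid_coords n u - u $ (n+1) \<cdot>\<^sub>v x0)"
    using u x0 by (intro eq_vecI) (auto simp: affine_cone_def mid_coords_def algebra_simps)
  then show "c \<cdot>\<^sub>v u \<in> affine_cone n x0 W"
    using u W by (auto simp: affine_cone_def complex_subspace_def)
qed

lemma affine_cone_decomp:
  assumes u: "u \<in> carrier_vec (n+2)" and x0: "x0 \<in> carrier_vec n"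
  shows "u = u $ 0 \<cdot>\<^sub>v pvec n + (u $ (n+1) - 1) \<cdot>\<^sub>v lift_point n x0
    + lift_point n (x0 + (mid_coords n u - u $ (n+1) \<cdot>\<^sub>v x0))"
proof (rule eq_vecI)
  fix i assume "i < dim_vec (u $ 0 \<cdot>\<^sub>v pvec n + (u $ (n+1) - 1) \<cdot>\<^sub>v lift_point n x0
    + lift_point n (x0 + (mid_coords n u - u $ (n+1) \<cdot>\<^sub>v x0)))"
  then have "i < n+2" by (simp add: pvec_def)
  then consider "i = 0" | j where "j < n" "i = Suc j" | "i = n+1"
    by (cases i) fastforce+
  then show "u $ i = (u $ 0 \<cdot>\<^sub>v pvec n + (u $ (n+1) - 1) \<cdot>\<^sub>v lift_point n x0
    + lift_point n (x0 + (mid_coords n u - u $ (n+1) \<cdot>\<^sub>v x0))) $ i"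
    by cases (use x0 in \<open>auto simp: pvec_def lift_point_def mid_coords_def algebra_simps\<close>)
qed (use u in \<open>simp add: pvec_def\<close>)

lemma affine_cone_closed:
  assumes g: "g \<in> U1n_p n" and W: "complex_subspace n W" and x0: "x0 \<in> carrier_vec n"
    and inv: "Gamma n g ` ((\<lambda>w. x0 + w) ` W) \<subseteq> (\<lambda>w. x0 + w) ` W"
    and u: "u \<in> affine_cone n x0 W"
  shows "g *\<^sub>v u \<in> affine_cone n x0 W"
proof -
  let ?C = "affine_cone n x0 W"
  have gc: "g \<in> carrier_mat (n+2) (n+2)" using U1n_p_carrier[OF g] .
  have C: "complex_subspace (n+2) ?C" using complex_subspace_affine_cone[OF W x0] .
  have p: "pvec n \<in> ?C" using pvec_in_affine_cone[OF W x0] .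
  have image_lift: "g *\<^sub>v lift_point n (x0 + w) \<in> ?C" if w: "w \<in> W" for w
  proof -
    obtain w' where w': "w' \<in> W" "Gamma n g (x0 + w) = x0 + w'" using inv w by blast
    have "w' \<in> carrier_vec n" using w' complex_subspace_carrier[OF W] by blast
    then have "lift_point n (Gamma n g (x0 + w)) \<in> ?C"
      using w' x0 by (simp add: lift_point_in_affine_cone_iff add_diff_cancel_left_vec)
    moreover have xw: "x0 + w \<in> carrier_vec n" using w x0 complex_subspace_carrier[OF W] by auto
    ultimately show ?thesis
      by (subst lift_point_image[OF g xw])
        (intro complex_subspace_add[OF C] complex_subspace_smult[OF C] p)
  qed
  obtain c where "g *\<^sub>v pvec n = c \<cdot>\<^sub>v pvec n" using g unfolding U1n_p_def by blast
  then have image_p: "g *\<^sub>v pvec n \<in> ?C" by (simp add: complex_subspace_smult[OF C p])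
  have image_x0: "g *\<^sub>v lift_point n x0 \<in> ?C"
    using image_lift[of "0\<^sub>v n"] W x0 by (simp add: complex_subspace_def)
  define w where "w = mid_coords n u - u $ (n+1) \<cdot>\<^sub>v x0"
  have uc: "u \<in> carrier_vec (n+2)" and "w \<in> W" using u by (auto simp: affine_cone_def w_def)
  have "g *\<^sub>v u = g *\<^sub>v (u $ 0 \<cdot>\<^sub>v pvec n + (u $ (n+1) - 1) \<cdot>\<^sub>v lift_point n x0
      + lift_point n (x0 + w))"
    using affine_cone_decomp[OF uc x0] unfolding w_def by (rule arg_cong)
  also have "\<dots> = u $ 0 \<cdot>\<^sub>v (g *\<^sub>v pvec n) + (u $ (n+1) - 1) \<cdot>\<^sub>v (g *\<^sub>v lift_point n x0)
      + g *\<^sub>v lift_point n (x0 + w)"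
    by (simp add: mult_add_distrib_mat_vec[OF gc] mult_mat_vec[OF gc])
  also have "\<dots> \<in> ?C"
    by (intro complex_subspace_add[OF C] complex_subspace_smult[OF C] image_p image_x0
        image_lift[OF \<open>w \<in> W\<close>])
  finally show ?thesis .
qed

lemma nondegenerate_affine_cone:
  assumes W: "complex_subspace n W" and x0: "x0 \<in> carrier_vec n"
  shows "nondegenerate n (affine_cone n x0 W)"
  unfolding nondegenerate_def
proof (intro ballI impI)
  fix u assume u: "u \<in> affine_cone n x0 W" and orth: "\<forall>v\<in>affine_cone n x0 W. hform n u v = 0"
  have uc: "u \<in> carrier_vec (n+2)" using u by (simp add: affine_cone_def)
  have last: "u $ (n+1) = 0"
    using orth pvec_in_affine_cone[OF W x0] hform_pvec_right by metis
  moreover have "mid_coords n u - 0 \<cdot>\<^sub>v x0 = mid_coords n u"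
    using x0 by (intro eq_vecI) (auto simp: mid_coords_def)
  ultimately have "mid_coords n u \<in> W" using u by (simp add: affine_cone_def)
  then have "hform n u (lift_vector n (mid_coords n u)) = 0"
    using orth x0 by (simp add: lift_vector_in_affine_cone_iff mid_coords_def)
  moreover have "hform n u (lift_vector n (mid_coords n u)) = (\<Sum>j\<in>{1..n}. u $ j * cnj (u $ j))"
    unfolding hform_lift_vector_right by (intro sum.cong) (auto simp: mid_coords_def)
  ultimately have "(\<Sum>j\<in>{1..n}. u $ j * cnj (u $ j)) = 0"
    by simp
  then have mid: "u $ j = 0" if "j \<in> {1..n}" for j
    using sum_mult_cnj_eq_0D[of "{1..n}" "\<lambda>j. u $ j" j] that by simp
  have "hform n u (lift_point n x0) = u $ 0"
    using last mid by (simp add: hform_def lift_point_def)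
  moreover have "lift_point n x0 \<in> affine_cone n x0 W"
    using x0 W by (simp add: lift_point_in_affine_cone_iff complex_subspace_def)
  ultimately have first: "u $ 0 = 0"
    using orth by metis
  show "u = 0\<^sub>v (n+2)"
  proof (rule eq_vecI)
    fix i assume "i < dim_vec (0\<^sub>v (n+2) :: complex vec)"
    then consider "i = 0" | "i \<in> {1..n}" | "i = n+1" by fastforce
    then show "u $ i = 0\<^sub>v (n+2) $ i" using first mid last by cases auto
  qed (use uc in simp)
qed

lemma pvec_nonzero: "pvec n \<noteq> 0\<^sub>v (n+2)"
  unfolding pvec_def by (rule unit_vec_nonzero) simp

lemma affine_cone_nontrivial:
  assumes "complex_subspace n W" "x0 \<in> carrier_vec n"
  shows "affine_cone n x0 W \<noteq> {0\<^sub>v (n+2)}"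
  using pvec_in_affine_cone[OF assms] pvec_nonzero by blast

lemma affine_cone_eq_carrier_iff:
  assumes W: "complex_subspace n W" and x0: "x0 \<in> carrier_vec n"
  shows "affine_cone n x0 W = carrier_vec (n+2) \<longleftrightarrow> W = carrier_vec n"
proof
  assume "affine_cone n x0 W = carrier_vec (n+2)"
  then have "y \<in> W" if "y \<in> carrier_vec n" for y
    using lift_vector_in_affine_cone_iff[OF x0 that, of W] by simp
  then show "W = carrier_vec n" using complex_subspace_carrier[OF W] by blast
next
  assume "W = carrier_vec n"
  then show "affine_cone n x0 W = carrier_vec (n+2)"
    using x0 by (auto simp: affine_cone_def mid_coords_def)
qed

theorem Gamma_invariant_complex_affine_eq_carrier:
  assumes G: "is_subgroup_of n G (U1n_p n)" and irred: "weakly_irreducible n G"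
    and S: "complex_affine n S" and inv: "preserves_aff (Gamma n ` G) S"
  shows "S = carrier_vec n"
proof -
  obtain x0 W where x0: "x0 \<in> carrier_vec n" and W: "complex_subspace n W"
    and S_eq: "S = (\<lambda>w. x0 + w) ` W"
    using S unfolding complex_affine_def by blast
  let ?C = "affine_cone n x0 W"
  have "U1n_p n \<subseteq> carrier_mat (n+2) (n+2)" using U1n_p_carrier by blast
  moreover have "?C \<subseteq> carrier_vec (n+2)" by (auto simp: affine_cone_def)
  moreover have "g *\<^sub>v u \<in> ?C" if "g \<in> G" "u \<in> ?C" for g u
  proof (rule affine_cone_closed[OF _ W x0 _ that(2)])
    show "g \<in> U1n_p n" using G that(1) unfolding is_subgroup_of_def by blast
    show "Gamma n g ` ((\<lambda>w. x0 + w) ` W) \<subseteq> (\<lambda>w. x0 + w) ` W"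
      using inv that(1) unfolding preserves_aff_def S_eq by blast
  qed
  ultimately have "preserves_lin G ?C" by (rule preserves_lin_if_closed[OF G])
  then have "?C = carrier_vec (n+2)"
    using irred complex_subspace_affine_cone[OF W x0] affine_cone_nontrivial[OF W x0]
      nondegenerate_affine_cone[OF W x0]
    unfolding weakly_irreducible_def by blast
  then have "W = carrier_vec n" using affine_cone_eq_carrier_iff[OF W x0] by blast
  then show "S = carrier_vec n"
    unfolding S_eq using x0
    by (auto intro!: image_eqI[where x = "_ - x0"] simp: add_diff_cancel_left_vec)
qed

definition complexification :: "complex vec set \<Rightarrow> complex vec set" where
  "complexification V = {u + \<i> \<cdot>\<^sub>v v | u v. u \<in> V \<and> v \<in> V}"

lemma complex_subspace_complexification:
  assumes V: "real_subspace n V"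
  shows "complex_subspace n (complexification V)"
  unfolding complex_subspace_def
proof (intro conjI ballI allI subsetI)
  note Vc = real_subspace_carrier[OF V]
  note V_closed = V[unfolded real_subspace_def]
  show "x \<in> carrier_vec n" if "x \<in> complexification V" for x
    using that Vc by (auto simp: complexification_def)
  have "0\<^sub>v n = 0\<^sub>v n + \<i> \<cdot>\<^sub>v 0\<^sub>v n" by auto
  then show "0\<^sub>v n \<in> complexification V" using V_closed unfolding complexification_def by blast
  fix x y assume "x \<in> complexification V" "y \<in> complexification V"
  then obtain u1 v1 u2 v2 where x: "x = u1 + \<i> \<cdot>\<^sub>v v1" and y: "y = u2 + \<i> \<cdot>\<^sub>v v2"
    and uv: "u1 \<in> V" "v1 \<in> V" "u2 \<in> V" "v2 \<in> V"
    unfolding complexification_def by blast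
  have "x + y = (u1 + u2) + \<i> \<cdot>\<^sub>v (v1 + v2)"
    unfolding x y using Vc[OF uv(1)] Vc[OF uv(2)] Vc[OF uv(3)] Vc[OF uv(4)]
    by (intro eq_vecI) (auto simp: algebra_simps)
  then show "x + y \<in> complexification V"
    using uv V_closed unfolding complexification_def by blast
next
  fix c :: complex and x assume "x \<in> complexification V"
  then obtain u v where x: "x = u + \<i> \<cdot>\<^sub>v v" and uv: "u \<in> V" "v \<in> V"
    unfolding complexification_def by blast
  have "c \<cdot>\<^sub>v x = (complex_of_real (Re c) \<cdot>\<^sub>v u + complex_of_real (- Im c) \<cdot>\<^sub>v v)
      + \<i> \<cdot>\<^sub>v (complex_of_real (Im c) \<cdot>\<^sub>v u + complex_of_real (Re c) \<cdot>\<^sub>v v)"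
    unfolding x using real_subspace_carrier[OF V uv(1)] real_subspace_carrier[OF V uv(2)]
    by (intro eq_vecI) (auto simp: complex_eq_iff algebra_simps)
  then show "c \<cdot>\<^sub>v x \<in> complexification V"
    using uv V[unfolded real_subspace_def] unfolding complexification_def by blast
qed

definition complex_combs :: "complex vec set \<Rightarrow> complex vec set" where
  "complex_combs L = {a + \<i> \<cdot>\<^sub>v b + (- \<i>) \<cdot>\<^sub>v c | a b c. a \<in> L \<and> b \<in> L \<and> c \<in> L}"

lemma image_complex_combs:
  assumes "\<And>a b c. a \<in> L \<Longrightarrow> b \<in> L \<Longrightarrow> c \<in> L \<Longrightarrow>
    f (a + \<i> \<cdot>\<^sub>v b + (- \<i>) \<cdot>\<^sub>v c) = f a + \<i> \<cdot>\<^sub>v f b + (- \<i>) \<cdot>\<^sub>v f c"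
  shows "f ` complex_combs L = complex_combs (f ` L)"
proof (intro equalityI subsetI)
  fix y assume "y \<in> f ` complex_combs L"
  then obtain a b c where abc: "a \<in> L" "b \<in> L" "c \<in> L"
    and "y = f (a + \<i> \<cdot>\<^sub>v b + (- \<i>) \<cdot>\<^sub>v c)"
    unfolding complex_combs_def by blast
  then have "y = f a + \<i> \<cdot>\<^sub>v f b + (- \<i>) \<cdot>\<^sub>v f c" using assms by simp
  then show "y \<in> complex_combs (f ` L)" using abc unfolding complex_combs_def by blast
next
  fix y assume "y \<in> complex_combs (f ` L)"
  then obtain a b c where abc: "a \<in> L" "b \<in> L" "c \<in> L"
    and "y = f a + \<i> \<cdot>\<^sub>v f b + (- \<i>) \<cdot>\<^sub>v f c"
    unfolding complex_combs_def by blast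
  then have "y = f (a + \<i> \<cdot>\<^sub>v b + (- \<i>) \<cdot>\<^sub>v c)" using assms by simp
  then show "y \<in> f ` complex_combs L" using abc unfolding complex_combs_def by blast
qed

lemma complex_combs_real_affine:
  assumes V: "real_subspace n V" and x0: "x0 \<in> carrier_vec n"
  shows "complex_combs ((\<lambda>w. x0 + w) ` V) = (\<lambda>w. x0 + w) ` complexification V"
proof (intro equalityI subsetI)
  note Vc = real_subspace_carrier[OF V]
  fix y
  assume "y \<in> complex_combs ((\<lambda>w. x0 + w) ` V)"
  then obtain a b c where y: "y = (x0 + a) + \<i> \<cdot>\<^sub>v (x0 + b) + (- \<i>) \<cdot>\<^sub>v (x0 + c)"
    and abc: "a \<in> V" "b \<in> V" "c \<in> V"
    unfolding complex_combs_def by blast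
  have "y = x0 + (a + \<i> \<cdot>\<^sub>v (b - c))"
    unfolding y using Vc[OF abc(1)] Vc[OF abc(2)] Vc[OF abc(3)] x0
    by (intro eq_vecI) (auto simp: algebra_simps)
  moreover have "a + \<i> \<cdot>\<^sub>v (b - c) \<in> complexification V"
    using abc real_subspace_diff[OF V] unfolding complexification_def by blast
  ultimately show "y \<in> (\<lambda>w. x0 + w) ` complexification V" by blast
next
  note Vc = real_subspace_carrier[OF V]
  fix y
  assume "y \<in> (\<lambda>w. x0 + w) ` complexification V"
  then obtain u v where y: "y = x0 + (u + \<i> \<cdot>\<^sub>v v)" and uv: "u \<in> V" "v \<in> V"
    unfolding complexification_def by blast
  have "y = (x0 + u) + \<i> \<cdot>\<^sub>v (x0 + v) + (- \<i>) \<cdot>\<^sub>v (x0 + 0\<^sub>v n)"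
    unfolding y using Vc[OF uv(1)] Vc[OF uv(2)] x0 by (intro eq_vecI) (auto simp: algebra_simps)
  moreover have "0\<^sub>v n \<in> V" using V by (simp add: real_subspace_def)
  ultimately show "y \<in> complex_combs ((\<lambda>w. x0 + w) ` V)"
    unfolding complex_combs_def using uv by blast
qed

lemma real_affine_subset_carrier: "real_affine n L \<Longrightarrow> L \<subseteq> carrier_vec n"
  unfolding real_affine_def using real_subspace_carrier by fastforce

lemma complex_affine_complex_combs:
  assumes "real_affine n L"
  shows "complex_affine n (complex_combs L)"
proof -
  obtain x0 V where x0: "x0 \<in> carrier_vec n" and V: "real_subspace n V"
    and L_eq: "L = (\<lambda>w. x0 + w) ` V"
    using assms unfolding real_affine_def by blast
  have "complex_combs L = (\<lambda>w. x0 + w) ` complexification V"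
    unfolding L_eq by (rule complex_combs_real_affine[OF V x0])
  then show ?thesis
    unfolding complex_affine_def using x0 complex_subspace_complexification[OF V] by blast
qed

lemma complex_affine_affine_comb:
  assumes S: "complex_affine m S" and "a \<in> S" "b \<in> S" "c \<in> S" and coeffs: "\<alpha> + \<beta> + \<gamma> = 1"
  shows "\<alpha> \<cdot>\<^sub>v a + \<beta> \<cdot>\<^sub>v b + \<gamma> \<cdot>\<^sub>v c \<in> S"
proof -
  obtain x0 W where x0: "x0 \<in> carrier_vec m" and W: "complex_subspace m W"
    and S_eq: "S = (\<lambda>w. x0 + w) ` W"
    using S unfolding complex_affine_def by blast
  obtain wa wb wc where w: "wa \<in> W" "wb \<in> W" "wc \<in> W"
    and abc: "a = x0 + wa" "b = x0 + wb" "c = x0 + wc"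
    using assms(2-4) unfolding S_eq by blast
  have carrier: "wa \<in> carrier_vec m" "wb \<in> carrier_vec m" "wc \<in> carrier_vec m"
    using w complex_subspace_carrier[OF W] by auto
  have \<gamma>: "\<gamma> = 1 - \<alpha> - \<beta>" using coeffs by (simp add: algebra_simps)
  have "\<alpha> \<cdot>\<^sub>v a + \<beta> \<cdot>\<^sub>v b + \<gamma> \<cdot>\<^sub>v c = x0 + (\<alpha> \<cdot>\<^sub>v wa + \<beta> \<cdot>\<^sub>v wb + \<gamma> \<cdot>\<^sub>v wc)"
  proof (rule eq_vecI)
    fix i assume "i < dim_vec (x0 + (\<alpha> \<cdot>\<^sub>v wa + \<beta> \<cdot>\<^sub>v wb + \<gamma> \<cdot>\<^sub>v wc))"
    then have "i < m" using x0 carrier by simp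
    then show "(\<alpha> \<cdot>\<^sub>v a + \<beta> \<cdot>\<^sub>v b + \<gamma> \<cdot>\<^sub>v c) $ i = (x0 + (\<alpha> \<cdot>\<^sub>v wa + \<beta> \<cdot>\<^sub>v wb + \<gamma> \<cdot>\<^sub>v wc)) $ i"
      unfolding \<gamma> using carrier x0 by (simp add: abc algebra_simps)
  qed (use carrier x0 abc in auto)
  moreover have "\<alpha> \<cdot>\<^sub>v wa + \<beta> \<cdot>\<^sub>v wb + \<gamma> \<cdot>\<^sub>v wc \<in> W"
    using w by (intro complex_subspace_add[OF W] complex_subspace_smult[OF W])
  ultimately show ?thesis unfolding S_eq by blast
qed

lemma complex_affine_hull_real_affine:
  assumes L: "real_affine n L"
  shows "complex_affine_hull n L = complex_combs L"
proof (rule antisym)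
  have "a = a + \<i> \<cdot>\<^sub>v a + (- \<i>) \<cdot>\<^sub>v a" if "a \<in> L" for a
    using that real_affine_subset_carrier[OF L] by (intro eq_vecI) auto
  then have "L \<subseteq> complex_combs L" unfolding complex_combs_def by blast
  then show "complex_affine_hull n L \<subseteq> complex_combs L"
    unfolding complex_affine_hull_def using complex_affine_complex_combs[OF L] by blast
  have "complex_combs L \<subseteq> S" if S: "complex_affine n S" "L \<subseteq> S" for S
  proof
    fix y assume "y \<in> complex_combs L"
    then obtain a b c where abc: "a \<in> S" "b \<in> S" "c \<in> S"
      and "y = a + \<i> \<cdot>\<^sub>v b + (- \<i>) \<cdot>\<^sub>v c"
      using S(2) unfolding complex_combs_def by auto
    then show "y \<in> S" using complex_affine_affine_comb[OF S(1) abc, of 1 \<i> "- \<i>"] by simp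
  qed
  then show "complex_combs L \<subseteq> complex_affine_hull n L"
    unfolding complex_affine_hull_def by blast
qed

lemma image_Gamma_complex_combs:
  assumes M: "M \<in> carrier_mat (n+2) (n+2)" and L: "L \<subseteq> carrier_vec n"
  shows "Gamma n M ` complex_combs L = complex_combs (Gamma n M ` L)"
proof (rule image_complex_combs)
  fix a b c assume "a \<in> L" "b \<in> L" "c \<in> L"
  then have "a \<in> carrier_vec n" "b \<in> carrier_vec n" "c \<in> carrier_vec n" using L by auto
  then show "Gamma n M (a + \<i> \<cdot>\<^sub>v b + (- \<i>) \<cdot>\<^sub>v c)
      = Gamma n M a + \<i> \<cdot>\<^sub>v Gamma n M b + (- \<i>) \<cdot>\<^sub>v Gamma n M c"
    using Gamma_affine_comb[OF M, of a b c 1 \<i> "- \<i>"] by simp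
qed

theorem mainTheorem3:
  fixes n :: nat and G :: "complex mat set"
  assumes "is_subgroup_of n G (U1n_p n)"
    and "weakly_irreducible n G"
  shows "\<not> (\<exists>S. complex_affine n S \<and> S \<noteq> carrier_vec n \<and> preserves_aff (Gamma n ` G) S)
    \<and> (\<forall>L. real_affine n L \<and> L \<noteq> carrier_vec n \<and> preserves_aff (Gamma n ` G) L
            \<longrightarrow> complex_affine_hull n L = carrier_vec n)"
proof (intro conjI allI impI)
  note invariant_eq_carrier = Gamma_invariant_complex_affine_eq_carrier[OF assms]
  show "\<not> (\<exists>S. complex_affine n S \<and> S \<noteq> carrier_vec n \<and> preserves_aff (Gamma n ` G) S)"
    using invariant_eq_carrier by blast
  fix L assume "real_affine n L \<and> L \<noteq> carrier_vec n \<and> preserves_aff (Gamma n ` G) L"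
  then have L: "real_affine n L" and inv: "preserves_aff (Gamma n ` G) L" by auto
  have "Gamma n g ` complex_combs L = complex_combs L" if "g \<in> G" for g
  proof -
    have "g \<in> carrier_mat (n+2) (n+2)"
      using assms(1) \<open>g \<in> G\<close> U1n_p_carrier unfolding is_subgroup_of_def by blast
    then show ?thesis
      using image_Gamma_complex_combs real_affine_subset_carrier[OF L] inv \<open>g \<in> G\<close>
      unfolding preserves_aff_def by simp
  qed
  then have "complex_combs L = carrier_vec n"
    using invariant_eq_carrier complex_affine_complex_combs[OF L] unfolding preserves_aff_def by blast
  then show "complex_affine_hull n L = carrier_vec n"
    using complex_affine_hull_real_affine[OF L] by simp
qed

end
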